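(* Let $p\colon E\to B$ be an arc-covering with $E$ path-connected. Then every fiber $p^{-1}(b)$, $b\in B$ (with the subspace topology from $E$), is a $T_1$-space.
   Context: All maps are continuous. A map $p\colon E\to B$ is an arc-covering if (i) for every $e_0\in E$, every $t_0\in[0,1]$ and every map $f\colon [0,1]\to B$ with $f(t_0)=p(e_0)$ there is a map $g\colon[0,1]\to E$ with $p\circ g=f$ and $g(t_0)=e_0$, and (ii) such lifts are unique: if $g,h\colon[0,1]\to E$ satisfy $p\circ g=p\circ h$ and $g(t_0)=h(t_0)$ for some $t_0$, then $g=h$. *)

theory Defs
  imports "HOL-Analysis.Analysis"
begin

text \<open>Maps from [0,1] are HOL functions on real whose
restriction to [0,1] is continuous; only their values on [0,1] matter.\<close>

definition arc_covering :: "'a topology \<Rightarrow> 'b topology \<Rightarrow> ('a \<Rightarrow> 'b) \<Rightarrow> bool" where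
  "arc_covering E B p \<longleftrightarrow>
     continuous_map E B p \<and>
     (\<forall>e0 t0 f. e0 \<in> topspace E \<and> t0 \<in> {0..1::real} \<and>
        continuous_map (top_of_set {0..1}) B f \<and> f t0 = p e0 \<longrightarrow>
        (\<exists>g. continuous_map (top_of_set {0..1}) E g \<and>
             (\<forall>t\<in>{0..1}. p (g t) = f t) \<and> g t0 = e0)) \<and>
     (\<forall>g h t0. continuous_map (top_of_set {0..1::real}) E g \<and>
        continuous_map (top_of_set {0..1}) E h \<and>
        (\<forall>t\<in>{0..1}. p (g t) = p (h t)) \<and> t0 \<in> {0..1} \<and> g t0 = h t0 \<longrightarrow>
        (\<forall>t\<in>{0..1}. g t = h t))"

end

theory Submission
  imports Defs
begin

text \<open>If every neighbourhood of a point x of a fibre contained another point y of the same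
fibre, the path that stays at y on [0,1) and jumps to x at 1 would be continuous. It lifts
the constant path at p x just as the constant path at y does, and the two lifts agree at 0
but not at 1, contradicting uniqueness of lifts.\<close>

lemma continuous_map_jump_path:
  assumes "x \<in> topspace X" "y \<in> topspace X"
    and nbhds: "\<And>U. openin X U \<Longrightarrow> x \<in> U \<Longrightarrow> y \<in> U"
  shows "continuous_map (top_of_set {0..1::real}) X (\<lambda>t. if t < 1 then y else x)"
  unfolding continuous_map_def
proof (intro conjI allI impI)
  show "(\<lambda>t. if t < 1 then y else x) \<in> topspace (top_of_set {0..1}) \<rightarrow> topspace X"
    using assms(1,2) by auto
next
  fix U assume U: "openin X U"
  let ?S = "{t \<in> topspace (top_of_set {0..1::real}). (if t < 1 then y else x) \<in> U}"
  consider "x \<in> U" | "x \<notin> U" "y \<in> U" | "x \<notin> U" "y \<notin> U" by blast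
  then show "openin (top_of_set {0..1}) ?S"
  proof cases
    case 1
    then have "?S = topspace (top_of_set {0..1})"
      using nbhds[OF U] by auto
    then show ?thesis by (metis openin_topspace)
  next
    case 2
    then have "?S = {0..1} \<inter> {..<1}" by auto
    then show ?thesis by (metis open_lessThan openin_open_Int)
  next
    case 3
    then have "?S = {}" by auto
    then show ?thesis by (metis openin_empty)
  qed
qed

lemma arc_covering_lift_unique:
  assumes "arc_covering E B p"
    and "continuous_map (top_of_set {0..1::real}) E g"
    and "continuous_map (top_of_set {0..1}) E h"
    and "\<And>t. t \<in> {0..1} \<Longrightarrow> p (g t) = p (h t)"
    and "s \<in> {0..1}" "g s = h s" "t \<in> {0..1}"
  shows "g t = h t"
  using assms unfolding arc_covering_def by blast

theorem proposition2p4: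
  fixes E :: "'a topology" and B :: "'b topology" and p :: "'a \<Rightarrow> 'b"
  assumes "arc_covering E B p"
    and "path_connected_space E"
    and "b \<in> topspace B"
  shows "t1_space (subtopology E {e \<in> topspace E. p e = b})"
  unfolding t1_space_def
proof (intro ballI impI)
  let ?F = "{e \<in> topspace E. p e = b}"
  fix x y
  assume "x \<in> topspace (subtopology E ?F)" "y \<in> topspace (subtopology E ?F)" "x \<noteq> y"
  then have x: "x \<in> topspace E" "p x = b" and y: "y \<in> topspace E" "p y = b" and "x \<noteq> y"
    by auto
  show "\<exists>U. openin (subtopology E ?F) U \<and> x \<in> U \<and> y \<notin> U"
  proof (rule ccontr)
    assume "\<not> ?thesis"
    then have "y \<in> U" if "openin E U" "x \<in> U" for U
      using that x openin_subtopology_Int[of E U ?F] by blast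
    moreover define jump where "jump = (\<lambda>t::real. if t < 1 then y else x)"
    ultimately have "continuous_map (top_of_set {0..1}) E jump"
      using x y by (auto intro: continuous_map_jump_path)
    then have "jump 1 = y"
      by (rule arc_covering_lift_unique[OF assms(1), where h = "\<lambda>_. y" and s = 0])
        (use x y in \<open>auto simp: jump_def\<close>)
    then have "x = y" by (simp add: jump_def)
    with \<open>x \<noteq> y\<close> show False by simp
  qed
qed

end
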